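(* Let $\mathcal{H},\mathcal{K}$ be complex Hilbert spaces, let $A,B,D\in\mathcal{B}(\mathcal{H})$ be positive selfadjoint operators, and let $\Phi:\mathcal{B}(\mathcal{H})\to\mathcal{B}(\mathcal{K})$ be a normalized positive linear map. Let $g:[0,\infty)\to\mathbb{R}$ be continuous with $g(0)=0$. If $g$ is convex (resp. concave), then for every $x\in\mathcal{K}$ with $\|x\|=1$, \begin{align*} &\Big\langle\Phi\Big(\tfrac{g(A)+g(B)+g(D)}{3}\Big)x,x\Big\rangle+g\Big(\Big\langle\Phi\Big(\tfrac{A+B+D}{3}\Big)x,x\Big\rangle\Big)\\ &\ge(\text{resp. }\le)\ \frac{2}{3}\Big[g\Big(\Big\langle\Phi\Big(\tfrac{A+B}{2}\Big)x,x\Big\rangle\Big)+g\Big(\Big\langle\Phi\Big(\tfrac{B+D}{2}\Big)x,x\Big\rangle\Big)+g\Big(\Big\langle\Phi\Big(\tfrac{A+D}{2}\Big)x,x\Big\rangle\Big)\Big]. \end{align*}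
   Context: A linear map $\Phi$ is positive if it maps positive operators to positive operators, and normalized if $\Phi(1_{\mathcal{H}})=1_{\mathcal{K}}$. Functions of selfadjoint operators are defined by the continuous functional calculus. *)

theory Defs
  imports "HOL-Analysis.Analysis" "HOL-Computational_Algebra.Polynomial"
begin

text \<open>Complex Hilbert spaces: a real Banach space equipped with a complex scalar
multiplication and a complex inner product (linear in the first argument) inducing the norm.\<close>

class chilbert = banach +
  fixes cscale :: "complex \<Rightarrow> 'a \<Rightarrow> 'a"
    and cinner :: "'a \<Rightarrow> 'a \<Rightarrow> complex"
  assumes cscale_of_real: "cscale (of_real r) x = scaleR r x"
    and cscale_add_left: "cscale (a + b) x = cscale a x + cscale b x"
    and cscale_add_right: "cscale a (x + y) = cscale a x + cscale a y"
    and cscale_assoc: "cscale a (cscale b x) = cscale (a * b) x"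
    and cinner_add_left: "cinner (x + y) z = cinner x z + cinner y z"
    and cinner_cscale_left: "cinner (cscale c x) y = c * cinner x y"
    and cinner_commute: "cinner y x = cnj (cinner x y)"
    and cinner_norm: "cinner x x = complex_of_real ((norm x)\<^sup>2)"

definition bounded_clinear :: "('a::chilbert \<Rightarrow> 'b::chilbert) \<Rightarrow> bool" where
  "bounded_clinear T \<longleftrightarrow> bounded_linear T \<and> (\<forall>c x. T (cscale c x) = cscale c (T x))"

definition selfadjoint_op :: "('a::chilbert \<Rightarrow> 'a) \<Rightarrow> bool" where
  "selfadjoint_op T \<longleftrightarrow> (\<forall>x y. cinner (T x) y = cinner x (T y))"

definition pos_op :: "('a::chilbert \<Rightarrow> 'a) \<Rightarrow> bool" where
  "pos_op T \<longleftrightarrow> bounded_clinear T \<and> selfadjoint_op T \<and> (\<forall>x. 0 \<le> Re (cinner (T x) x))"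

definition normalized_positive_map :: "(('a::chilbert \<Rightarrow> 'a) \<Rightarrow> ('b::chilbert \<Rightarrow> 'b)) \<Rightarrow> bool" where
  "normalized_positive_map \<Phi> \<longleftrightarrow>
     (\<forall>S. bounded_clinear S \<longrightarrow> bounded_clinear (\<Phi> S)) \<and>
     (\<forall>S T. bounded_clinear S \<longrightarrow> bounded_clinear T \<longrightarrow>
        \<Phi> (\<lambda>y. S y + T y) = (\<lambda>y. \<Phi> S y + \<Phi> T y)) \<and>
     (\<forall>c S. bounded_clinear S \<longrightarrow> \<Phi> (\<lambda>y. cscale c (S y)) = (\<lambda>y. cscale c (\<Phi> S y))) \<and>
     (\<forall>S. pos_op S \<longrightarrow> pos_op (\<Phi> S)) \<and>
     \<Phi> id = id"

definition poly_op :: "real poly \<Rightarrow> ('a::chilbert \<Rightarrow> 'a) \<Rightarrow> 'a \<Rightarrow> 'a" where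
  "poly_op p A = (\<lambda>x. \<Sum>i\<le>degree p. scaleR (coeff p i) ((A ^^ i) x))"

text \<open>Continuous functional calculus for a positive operator A (spectrum contained in
[0, norm A]): g(A) is the operator-norm limit of p_n(A) for any sequence of real polynomials
p_n converging uniformly to g on [0, norm A].\<close>
definition cfc :: "(real \<Rightarrow> real) \<Rightarrow> ('a::chilbert \<Rightarrow> 'a) \<Rightarrow> 'a \<Rightarrow> 'a" where
  "cfc g A = (THE T. bounded_clinear T \<and>
     (\<forall>p :: nat \<Rightarrow> real poly.
        uniform_limit {0..onorm A} (\<lambda>n t. poly (p n) t) g sequentially \<longrightarrow>
        (\<lambda>n. onorm (\<lambda>x. poly_op (p n) A x - T x)) \<longlonglongrightarrow> 0))"

end

theory Submission
  imports Defs "HOL-Computational_Algebra.Fundamental_Theorem_Algebra"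
begin

text \<open>
  The functional calculus is built by approximating \<open>g\<close> uniformly on \<open>[0, \<parallel>A\<parallel>]\<close> by real
  polynomials. The one genuinely operator-theoretic fact needed is that \<open>p(A) \<ge> 0\<close> whenever
  \<open>p \<ge> 0\<close> on \<open>[0, \<parallel>A\<parallel>]\<close>: it makes \<open>p \<mapsto> p(A)\<close> contractive for the sup norm, so \<open>g(A)\<close> is
  well defined, and it turns every affine minorant \<open>a + b t \<le> g t\<close> into \<open>a + b A \<le> g(A)\<close>.
  Applying the unital positive map \<open>\<Phi>\<close> and the state \<open>\<langle>\<cdot> x, x\<rangle>\<close> then gives Jensen's inequality
  \<open>g(\<langle>\<Phi>(A) x, x\<rangle>) \<le> \<langle>\<Phi>(g(A)) x, x\<rangle>\<close> for convex \<open>g\<close>, since a convex function is the supremum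
  of its affine minorants. By linearity of \<open>\<Phi>\<close> the averages on both sides of the claim are
  averages of \<open>a = \<langle>\<Phi>(A) x, x\<rangle>\<close>, \<open>b\<close>, \<open>d\<close>, so it reduces to Popoviciu's inequality
  \<open>g(a) + g(b) + g(d) + 3 g((a+b+d)/3) \<ge> 2 (g((a+b)/2) + g((b+d)/2) + g((a+d)/2))\<close>.
  The concave case is the convex case for \<open>-g\<close>.
\<close>

section \<open>Complex inner product spaces\<close>

lemma cinner_zero_left [simp]: "cinner 0 y = 0"
  using cinner_add_left[of 0 0 y] by simp

lemma cinner_minus_left: "cinner (- x) y = - cinner x y"
  using cinner_add_left[of x "- x" y] by (simp add: add_eq_0_iff)

lemma cinner_diff_left: "cinner (x - y) z = cinner x z - cinner y z"
  using cinner_add_left[of x "- y" z] by (simp add: cinner_minus_left)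

lemma cinner_scaleR_left: "cinner (r *\<^sub>R x) y = of_real r * cinner x y"
  by (metis cinner_cscale_left cscale_of_real)

lemma cinner_add_right: "cinner x (y + z) = cinner x y + cinner x z"
  by (metis cinner_add_left cinner_commute complex_cnj_add)

lemma cinner_diff_right: "cinner x (y - z) = cinner x y - cinner x z"
  by (metis cinner_diff_left cinner_commute complex_cnj_diff)

lemma cinner_zero_right [simp]: "cinner x 0 = 0"
  by (metis cinner_commute cinner_zero_left complex_cnj_zero)

lemma cinner_minus_right: "cinner x (- y) = - cinner x y"
  by (metis cinner_commute cinner_minus_left complex_cnj_minus)

lemma cinner_scaleR_right: "cinner x (r *\<^sub>R y) = of_real r * cinner x y"
  by (metis cinner_commute cinner_scaleR_left complex_cnj_mult complex_cnj_complex_of_real)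

lemma cinner_cscale_right: "cinner x (cscale c y) = cnj c * cinner x y"
  by (metis cinner_commute cinner_cscale_left complex_cnj_mult)

lemma Re_cinner_self: "Re (cinner x x) = (norm x)\<^sup>2"
  by (simp add: cinner_norm)

lemma Re_cinner_commute: "Re (cinner y x) = Re (cinner x y)"
  by (subst cinner_commute) simp

lemma norm_add_power2: "(norm (x + y))\<^sup>2 = (norm x)\<^sup>2 + 2 * Re (cinner x y) + (norm y)\<^sup>2"
  by (simp flip: Re_cinner_self add: cinner_add_left cinner_add_right Re_cinner_commute[of y x])

lemma Re_cinner_le_norm: "Re (cinner x y) \<le> norm x * norm y"
proof -
  have "(norm (x + y))\<^sup>2 \<le> (norm x + norm y)\<^sup>2"
    using norm_triangle_ineq[of x y] by (simp add: power_mono)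
  then show ?thesis using norm_add_power2[of x y] by (simp add: power2_eq_square algebra_simps)
qed

lemma abs_Re_cinner_le_norm: "\<bar>Re (cinner x y)\<bar> \<le> norm x * norm y"
  using Re_cinner_le_norm[of x y] Re_cinner_le_norm[of "- x" y]
  by (simp add: cinner_minus_left abs_le_iff)

lemma cscale_scaleR: "cscale c (r *\<^sub>R x) = r *\<^sub>R cscale c x"
  by (metis cscale_assoc cscale_of_real mult.commute)

lemma cscale_zero_right [simp]: "cscale c 0 = 0"
  using cscale_add_right[of c 0 0] by simp

lemma cscale_sum: "cscale c (sum f A) = (\<Sum>i\<in>A. cscale c (f i))"
  by (induction A rule: infinite_finite_induct) (auto simp: cscale_add_right)

lemma norm_cscale: "norm (cscale c x) = cmod c * norm x"
proof -
  have "complex_of_real ((norm (cscale c x))\<^sup>2) = c * cnj c * complex_of_real ((norm x)\<^sup>2)"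
    by (metis cinner_norm cinner_cscale_left cinner_cscale_right mult.assoc)
  also have "\<dots> = complex_of_real ((cmod c * norm x)\<^sup>2)"
    by (simp only: complex_mult_cnj power_mult_distrib of_real_mult cmod_power2)
  finally have "(norm (cscale c x))\<^sup>2 = (cmod c * norm x)\<^sup>2" using of_real_eq_iff by blast
  then show ?thesis by (simp add: power2_eq_iff_nonneg)
qed

lemma bounded_linear_cscale: "bounded_linear (cscale c)"
proof
  show "cscale c (x + y) = cscale c x + cscale c y" for x y by (rule cscale_add_right)
  show "cscale c (r *\<^sub>R x) = r *\<^sub>R cscale c x" for r x by (rule cscale_scaleR)
  show "\<exists>K. \<forall>x. norm (cscale c x) \<le> norm x * K"
    by (rule exI[of _ "cmod c"]) (simp add: norm_cscale mult.commute)
qed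

lemma bounded_linear_cinner_left: "bounded_linear (\<lambda>v. cinner v y)"
proof
  show "cinner (x + z) y = cinner x y + cinner z y" for x z by (rule cinner_add_left)
  show "cinner (r *\<^sub>R x) y = r *\<^sub>R cinner x y" for r x
    by (simp add: cinner_scaleR_left scaleR_conv_of_real)
  have "cmod (cinner v y) \<le> norm v * (2 * norm y)" for v
  proof -
    have "Re (cinner (cscale (- \<i>) v) y) = Im (cinner v y)"
      by (simp add: cinner_cscale_left)
    then show ?thesis
      using abs_Re_cinner_le_norm[of v y] abs_Re_cinner_le_norm[of "cscale (- \<i>) v" y]
        cmod_le[of "cinner v y"]
      by (simp add: norm_cscale)
  qed
  then show "\<exists>K. \<forall>x. cmod (cinner x y) \<le> norm x * K" by blast
qed

section \<open>Bounded operators\<close>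

lemma bounded_clinear_add:
  "bounded_clinear S \<Longrightarrow> bounded_clinear T \<Longrightarrow> bounded_clinear (\<lambda>y. S y + T y)"
  by (auto simp: bounded_clinear_def cscale_add_right intro: bounded_linear_add)

lemma bounded_clinear_scaleR: "bounded_clinear S \<Longrightarrow> bounded_clinear (\<lambda>y. r *\<^sub>R S y)"
  by (auto simp: bounded_clinear_def cscale_scaleR
      intro: bounded_linear_compose[OF bounded_linear_scaleR_right])

lemma bounded_clinear_ident: "bounded_clinear (\<lambda>y. y)"
  by (simp add: bounded_clinear_def bounded_linear_ident[unfolded id_def])

lemma Re_cinner_le_onorm:
  assumes "bounded_linear T"
  shows "Re (cinner (T x) x) \<le> onorm T * (norm x)\<^sup>2"
proof -
  have "Re (cinner (T x) x) \<le> norm (T x) * norm x" by (rule Re_cinner_le_norm)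
  also have "\<dots> \<le> onorm T * norm x * norm x"
    using onorm[OF assms, of x] by (simp add: mult_right_mono)
  finally show ?thesis by (simp add: power2_eq_square mult.assoc)
qed

lemma pos_opD:
  assumes "pos_op A"
  shows "bounded_linear A" "linear A" "selfadjoint_op A" "\<And>x. 0 \<le> Re (cinner (A x) x)"
    "\<And>c x. A (cscale c x) = cscale c (A x)"
  using assms bounded_linear.linear by (auto simp: pos_op_def bounded_clinear_def)

lemma selfadjoint_norm_le:
  assumes lin: "linear T" and sa: "selfadjoint_op T"
    and K: "\<And>x. \<bar>Re (cinner (T x) x)\<bar> \<le> K * (norm x)\<^sup>2"
  shows "norm (T x) \<le> K * norm x"
proof (cases "T x = 0")
  case True
  have "0 \<le> K * (norm x)\<^sup>2" using K[of x] by linarith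
  then have "0 \<le> K \<or> x = 0" by (auto simp: zero_le_mult_iff)
  then show ?thesis using True by auto
next
  case False
  then have x: "x \<noteq> 0" using linear_0[OF lin] by auto
  define y where "y = (norm x / norm (T x)) *\<^sub>R T x"
  have ny: "norm y = norm x" using False by (simp add: y_def)
  have Rxy: "Re (cinner (T x) y) = norm x * norm (T x)"
    using False by (simp add: y_def cinner_scaleR_right Re_cinner_self power2_eq_square)
  have "4 * Re (cinner (T x) y) = Re (cinner (T (x + y)) (x + y)) - Re (cinner (T (x - y)) (x - y))"
    using sa by (simp add: linear_add[OF lin] linear_diff[OF lin] cinner_add_left cinner_add_right
        cinner_diff_left cinner_diff_right selfadjoint_op_def Re_cinner_commute[of x "T y"])
  also have "\<dots> \<le> K * ((norm (x + y))\<^sup>2 + (norm (x - y))\<^sup>2)"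
    using K[of "x + y"] K[of "x - y"] by (simp add: abs_le_iff distrib_left)
  also have "(norm (x + y))\<^sup>2 + (norm (x - y))\<^sup>2 = 4 * (norm x)\<^sup>2"
    using norm_add_power2[of x y] norm_add_power2[of x "- y"] ny by (simp add: cinner_minus_right)
  finally have "norm x * norm (T x) \<le> norm x * (K * norm x)"
    unfolding Rxy by (simp add: power2_eq_square algebra_simps)
  then show ?thesis using x by simp
qed

text \<open>
  For \<open>0 \<le> S \<le> M\<close> put \<open>W = M - S\<close>; then \<open>S W S + W S W = M S W\<close>, and both summands are
  positive because \<open>S\<close> and \<open>W\<close> are selfadjoint. This replaces the usual square-root argument.
\<close>

lemma positive_norm_power2_le:
  assumes lin: "linear S" and sa: "selfadjoint_op S" and M: "M > 0"
    and pos: "\<And>x. 0 \<le> Re (cinner (S x) x)" and bound: "\<And>x. Re (cinner (S x) x) \<le> M * (norm x)\<^sup>2"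
  shows "(norm (S x))\<^sup>2 \<le> M * Re (cinner (S x) x)"
proof -
  define W where "W y = M *\<^sub>R y - S y" for y
  have W_pos: "0 \<le> Re (cinner (W y) y)" for y
    using bound[of y] by (simp add: W_def cinner_diff_left cinner_scaleR_left Re_cinner_self)
  have W_sa: "cinner (W y) z = cinner y (W z)" for y z
    using sa by (simp add: W_def cinner_diff_left cinner_diff_right cinner_scaleR_left
        cinner_scaleR_right selfadjoint_op_def)
  have SW: "S (W y) = M *\<^sub>R S y - S (S y)" for y
    by (simp add: W_def linear_diff[OF lin] linear_scale[OF lin])
  have sum: "S (W (S x)) + W (S (W x)) = M *\<^sub>R S (W x)"
    by (simp add: SW W_def linear_diff[OF lin] linear_scale[OF lin] algebra_simps)
  have "0 \<le> Re (cinner (S (W (S x))) x)"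
    using W_pos[of "S x"] sa by (simp add: selfadjoint_op_def)
  moreover have "0 \<le> Re (cinner (W (S (W x))) x)"
    using pos[of "W x"] by (simp add: W_sa)
  moreover have "M * Re (cinner (S (W x)) x) = Re (cinner (S (W (S x)) + W (S (W x))) x)"
    by (simp add: sum cinner_scaleR_left)
  then have "M * Re (cinner (S (W x)) x)
      = Re (cinner (S (W (S x))) x) + Re (cinner (W (S (W x))) x)"
    by (simp add: cinner_add_left)
  moreover have "cinner (S (S x)) x = cinner (S x) (S x)"
    using sa by (simp add: selfadjoint_op_def)
  then have "Re (cinner (S (W x)) x) = M * Re (cinner (S x) x) - (norm (S x))\<^sup>2"
    by (simp add: SW cinner_diff_left cinner_scaleR_left Re_cinner_self)
  ultimately have "0 \<le> M * (M * Re (cinner (S x) x) - (norm (S x))\<^sup>2)"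
    by (metis add_nonneg_nonneg)
  then show ?thesis using M by (simp add: zero_le_mult_iff)
qed

lemma numerical_range_Inf:
  fixes T :: "'a::chilbert \<Rightarrow> 'a" and x0 :: 'a
  assumes T: "bounded_linear T" and x0: "x0 \<noteq> 0"
  obtains m where "\<And>x. m * (norm x)\<^sup>2 \<le> Re (cinner (T x) x)"
    and "\<And>e. e > 0 \<Longrightarrow> \<exists>u. norm u = 1 \<and> Re (cinner (T u) u) < m + e"
proof -
  define V where "V = (\<lambda>u. Re (cinner (T u) u)) ` {u. norm u = 1}"
  have "(1 / norm x0) *\<^sub>R x0 \<in> {u. norm u = 1}" using x0 by simp
  then have V_ne: "V \<noteq> {}" unfolding V_def by blast
  have "- onorm T \<le> Re (cinner (T u) u)" if "norm u = 1" for u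
    using abs_Re_cinner_le_norm[of "T u" u] onorm[OF T, of u] that by simp
  then have V_bdd: "bdd_below V" by (auto simp: V_def bdd_below_def)
  have linT: "linear T" using T bounded_linear.linear by blast
  show ?thesis
  proof
    fix x
    show "Inf V * (norm x)\<^sup>2 \<le> Re (cinner (T x) x)"
    proof (cases "x = 0")
      case False
      define u where "u = (1 / norm x) *\<^sub>R x"
      have "Inf V \<le> Re (cinner (T u) u)"
        using False by (intro cInf_lower[OF _ V_bdd]) (simp add: V_def u_def)
      also have "\<dots> = Re (cinner (T x) x) / (norm x)\<^sup>2"
        by (simp add: u_def linear_scale[OF linT] cinner_scaleR_left cinner_scaleR_right
            power2_eq_square)
      finally show ?thesis using False by (simp add: pos_le_divide_eq)
    qed (simp add: linear_0[OF linT])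
  next
    fix e :: real
    assume "e > 0"
    then obtain v where "v \<in> V" "v < Inf V + e"
      using cInf_lessD[OF V_ne, of "Inf V + e"] by auto
    then show "\<exists>u. norm u = 1 \<and> Re (cinner (T u) u) < Inf V + e" by (auto simp: V_def)
  qed
qed

definition bounded_below_op :: "('a::real_normed_vector \<Rightarrow> 'b::real_normed_vector) \<Rightarrow> bool" where
  "bounded_below_op T \<longleftrightarrow> (\<exists>d>0. \<forall>x. d * norm x \<le> norm (T x))"

lemma coercive_imp_bounded_below_op:
  assumes d: "d > 0" and coercive: "\<And>x. d * (norm x)\<^sup>2 \<le> Re (cinner (T x) x)"
  shows "bounded_below_op T"
  unfolding bounded_below_op_def
proof (intro exI conjI allI)
  fix x
  have "(d * norm x) * norm x \<le> norm (T x) * norm x"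
    using coercive[of x] Re_cinner_le_norm[of "T x" x] by (simp add: power2_eq_square mult.assoc)
  then show "d * norm x \<le> norm (T x)"
    by (cases "x = 0") auto
qed (fact d)

lemma bounded_below_op_compose:
  assumes "bounded_below_op S" "bounded_below_op T"
  shows "bounded_below_op (\<lambda>x. S (T x))"
proof -
  obtain d1 d2 where d: "d1 > 0" "d2 > 0"
    and S: "\<And>x. d1 * norm x \<le> norm (S x)" and T: "\<And>x. d2 * norm x \<le> norm (T x)"
    using assms by (auto simp: bounded_below_op_def)
  have "d1 * d2 * norm x \<le> norm (S (T x))" for x
  proof -
    have "d1 * (d2 * norm x) \<le> d1 * norm (T x)" using T[of x] d by simp
    then show ?thesis using S[of "T x"] by (simp add: mult.assoc)
  qed
  then show ?thesis using d unfolding bounded_below_op_def by (intro exI[of _ "d1 * d2"]) auto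
qed

lemma positive_bounded_below_imp_coercive:
  assumes bl: "bounded_linear S" and sa: "selfadjoint_op S"
    and pos: "\<And>x. 0 \<le> Re (cinner (S x) x)" and below: "bounded_below_op S"
  obtains c where "c > 0" "\<And>x. c * (norm x)\<^sup>2 \<le> Re (cinner (S x) x)"
proof -
  obtain d where d: "d > 0" "\<And>x. d * norm x \<le> norm (S x)"
    using below by (auto simp: bounded_below_op_def)
  define M where "M = onorm S + 1"
  have M: "M > 0" using onorm_pos_le[OF bl] by (simp add: M_def)
  have "Re (cinner (S x) x) \<le> M * (norm x)\<^sup>2" for x
    using Re_cinner_le_onorm[OF bl, of x] by (simp add: M_def distrib_right add_increasing2)
  then have norm_le: "(norm (S x))\<^sup>2 \<le> M * Re (cinner (S x) x)" for x
    using positive_norm_power2_le[OF bounded_linear.linear[OF bl] sa M pos] by blast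
  have "d\<^sup>2 / M * (norm x)\<^sup>2 \<le> Re (cinner (S x) x)" for x
  proof -
    have "(d * norm x)\<^sup>2 \<le> (norm (S x))\<^sup>2" using d by (simp add: power_mono)
    then show ?thesis using norm_le[of x] M by (simp add: field_simps power_mult_distrib)
  qed
  moreover have "d\<^sup>2 / M > 0" using d M by simp
  ultimately show ?thesis using that by blast
qed

section \<open>Polynomials in an operator\<close>

lemma poly_op_eq_sum_upto:
  assumes "degree p \<le> N"
  shows "poly_op p A x = (\<Sum>i\<le>N. coeff p i *\<^sub>R (A ^^ i) x)"
  unfolding poly_op_def
  by (rule sum.mono_neutral_left) (use assms in \<open>auto simp: coeff_eq_0\<close>)

lemma poly_op_0 [simp]: "poly_op 0 A x = 0"
  by (simp add: poly_op_def)

lemma poly_op_add: "poly_op (p + q) A x = poly_op p A x + poly_op q A x"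
proof -
  define N where "N = max (degree p) (degree q)"
  have "poly_op (p + q) A x = (\<Sum>i\<le>N. coeff (p + q) i *\<^sub>R (A ^^ i) x)"
    by (rule poly_op_eq_sum_upto) (simp add: N_def degree_add_le)
  also have "\<dots> = (\<Sum>i\<le>N. coeff p i *\<^sub>R (A ^^ i) x) + (\<Sum>i\<le>N. coeff q i *\<^sub>R (A ^^ i) x)"
    by (simp add: scaleR_add_left sum.distrib)
  also have "\<dots> = poly_op p A x + poly_op q A x"
    using poly_op_eq_sum_upto[of p N A x] poly_op_eq_sum_upto[of q N A x] by (simp add: N_def)
  finally show ?thesis .
qed

lemma poly_op_smult: "poly_op (smult c p) A x = c *\<^sub>R poly_op p A x"
proof -
  have "poly_op (smult c p) A x = (\<Sum>i\<le>degree p. coeff (smult c p) i *\<^sub>R (A ^^ i) x)"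
    by (rule poly_op_eq_sum_upto) (simp add: degree_smult_le)
  then show ?thesis by (simp add: poly_op_def scaleR_sum_right)
qed

lemma poly_op_minus: "poly_op (- p) A x = - poly_op p A x"
  using poly_op_smult[of "- 1" p A x] by simp

lemma poly_op_diff: "poly_op (p - q) A x = poly_op p A x - poly_op q A x"
  using poly_op_add[of p "- q" A x] by (simp add: poly_op_minus)

lemma poly_op_const: "poly_op [:c:] A x = c *\<^sub>R x"
  by (simp add: poly_op_def)

lemma poly_op_pCons:
  assumes "linear A"
  shows "poly_op (pCons a p) A x = a *\<^sub>R x + A (poly_op p A x)"
proof -
  have "poly_op (pCons a p) A x = (\<Sum>i\<le>Suc (degree p). coeff (pCons a p) i *\<^sub>R (A ^^ i) x)"
    by (rule poly_op_eq_sum_upto) (simp add: degree_pCons_le)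
  also have "\<dots> = a *\<^sub>R x + (\<Sum>i\<le>degree p. coeff p i *\<^sub>R A ((A ^^ i) x))"
    by (subst sum.atMost_Suc_shift) (simp only: funpow.simps(2) comp_apply, simp)
  also have "(\<Sum>i\<le>degree p. coeff p i *\<^sub>R A ((A ^^ i) x)) = A (poly_op p A x)"
    by (simp add: poly_op_def linear_sum[OF assms] linear_scale[OF assms])
  finally show ?thesis .
qed

lemma poly_op_linear:
  assumes "linear A"
  shows "poly_op [:a, b:] A x = a *\<^sub>R x + b *\<^sub>R A x"
  by (simp add: poly_op_pCons[OF assms] poly_op_const linear_0[OF assms] linear_scale[OF assms])

lemma poly_op_mult:
  assumes "linear A"
  shows "poly_op (p * q) A x = poly_op p A (poly_op q A x)"
proof (induction p arbitrary: x)
  case (pCons a p)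
  have "poly_op (pCons a p * q) A x = poly_op (smult a q + pCons 0 (p * q)) A x"
    by (simp add: mult_pCons_left)
  also have "\<dots> = a *\<^sub>R poly_op q A x + A (poly_op p A (poly_op q A x))"
    by (simp add: poly_op_add poly_op_smult poly_op_pCons[OF assms] pCons.IH)
  also have "\<dots> = poly_op (pCons a p) A (poly_op q A x)"
    by (simp add: poly_op_pCons[OF assms])
  finally show ?case .
qed simp

lemma poly_op_commute:
  assumes "linear A"
  shows "poly_op p A (A x) = A (poly_op p A x)"
  using poly_op_mult[OF assms, of p "[:0, 1:]" x] poly_op_mult[OF assms, of "[:0, 1:]" p x]
  by (simp add: mult.commute poly_op_linear[OF assms])

lemma bounded_linear_poly_op:
  assumes "bounded_linear A"
  shows "bounded_linear (poly_op p A)"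
proof -
  have "bounded_linear (A ^^ n)" for n
    by (induction n) (auto simp: id_def comp_def intro: bounded_linear_compose[OF assms])
  then have "bounded_linear (\<lambda>x. \<Sum>i\<le>degree p. coeff p i *\<^sub>R (A ^^ i) x)"
    by (intro bounded_linear_sum bounded_linear_compose[OF bounded_linear_scaleR_right])
  then show ?thesis by (simp add: poly_op_def[abs_def])
qed

lemma poly_op_cscale:
  assumes "\<And>c y. A (cscale c y) = cscale c (A y)"
  shows "poly_op p A (cscale c y) = cscale c (poly_op p A y)"
proof -
  have "(A ^^ n) (cscale c y) = cscale c ((A ^^ n) y)" for n
    by (induction n) (auto simp: assms)
  then show ?thesis by (simp add: poly_op_def cscale_sum cscale_scaleR)
qed

lemma selfadjoint_poly_op:
  assumes lin: "linear A" and sa: "selfadjoint_op A"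
  shows "selfadjoint_op (poly_op p A)"
  unfolding selfadjoint_op_def
proof (induction p)
  case (pCons a p)
  show ?case
  proof (intro allI)
    fix x y
    have "cinner (poly_op (pCons a p) A x) y
        = of_real a * cinner x y + cinner (poly_op p A x) (A y)"
      using sa by (simp add: poly_op_pCons[OF lin] cinner_add_left cinner_scaleR_left
          selfadjoint_op_def)
    also have "\<dots> = cinner x (poly_op (pCons a p) A y)"
      using pCons.IH by (simp add: poly_op_commute[OF lin] poly_op_pCons[OF lin] cinner_add_right
          cinner_scaleR_right)
    finally show "cinner (poly_op (pCons a p) A x) y = cinner x (poly_op (pCons a p) A y)" .
  qed
qed simp

section \<open>Positivity of polynomials in a positive operator\<close>

lemma map_poly_of_real_add:
  "map_poly complex_of_real (p + q) = map_poly of_real p + map_poly of_real q"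
  by (intro poly_eqI) (simp add: coeff_map_poly)

lemma map_poly_of_real_mult:
  "map_poly complex_of_real (p * q) = map_poly of_real p * map_poly of_real q"
  by (intro poly_eqI) (simp add: coeff_map_poly coeff_mult)

lemma poly_map_poly_of_real: "poly (map_poly of_real p) (of_real x) = of_real (poly p x)"
  by (induction p) (auto simp: map_poly_pCons)

lemma nonreal_root_quadratic_dvd:
  fixes p :: "real poly"
  assumes root: "poly (map_poly of_real p) z = 0" and nonreal: "Im z \<noteq> 0"
  shows "[:(Re z)\<^sup>2 + (Im z)\<^sup>2, -2 * Re z, 1:] dvd p"
proof -
  define Q where "Q = [:(Re z)\<^sup>2 + (Im z)\<^sup>2, -2 * Re z, 1:]"
  define r where "r = p mod Q"
  have Q_root: "poly (map_poly of_real Q) z = 0"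
    by (simp add: Q_def map_poly_pCons complex_eq_iff power2_eq_square algebra_simps)
  have "p = p div Q * Q + r" by (simp add: r_def)
  then have "poly (map_poly of_real p) z
      = poly (map_poly of_real (p div Q)) z * poly (map_poly of_real Q) z
        + poly (map_poly of_real r) z"
    by (metis map_poly_of_real_add map_poly_of_real_mult poly_add poly_mult)
  then have r_root: "poly (map_poly of_real r) z = 0" using root Q_root by simp
  have deg_r: "degree r \<le> 1"
    using degree_mod_less[of Q p] by (auto simp: r_def Q_def)
  have "poly (map_poly of_real r) z = (\<Sum>i\<le>1. coeff (map_poly of_real r) i * z ^ i)"
    unfolding poly_altdef
    by (rule sum.mono_neutral_left) (use deg_r in \<open>auto simp: coeff_eq_0 degree_map_poly\<close>)
  then have "of_real (coeff r 0) + of_real (coeff r 1) * z = 0"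
    using r_root by (simp add: coeff_map_poly)
  then have "coeff r 1 = 0" "coeff r 0 = 0"
    using nonreal by (auto simp: complex_eq_iff)
  then have "coeff r n = 0" for n
    using deg_r coeff_eq_0[of r n] by (cases "n \<le> 1") (auto simp: le_Suc_eq)
  then have "r = 0" by (simp add: poly_eq_iff)
  then show ?thesis by (simp add: Q_def r_def mod_eq_0_iff_dvd)
qed

lemma real_poly_root_or_quadratic_factor:
  fixes p :: "real poly"
  assumes "degree p > 0"
  shows "(\<exists>r. poly p r = 0) \<or> (\<exists>a b. b \<noteq> 0 \<and> [:a\<^sup>2 + b\<^sup>2, -2 * a, 1:] dvd p)"
proof -
  have "\<not> constant (poly (map_poly complex_of_real p))"
    using assms by (simp add: constant_degree degree_map_poly)
  then obtain z where z: "poly (map_poly complex_of_real p) z = 0"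
    using fundamental_theorem_of_algebra by blast
  show ?thesis
  proof (cases "Im z = 0")
    case True
    then have "poly (map_poly of_real p) z = of_real (poly p (Re z))"
      by (metis complex_is_Real_iff of_real_Re poly_map_poly_of_real)
    then show ?thesis using z by auto
  next
    case False
    then show ?thesis using nonreal_root_quadratic_dvd[OF z] by blast
  qed
qed

context
  fixes A :: "'a::chilbert \<Rightarrow> 'a"
  assumes A: "pos_op A"
begin

lemma bounded_below_poly_op_const: "k \<noteq> 0 \<Longrightarrow> bounded_below_op (poly_op [:k:] A)"
  by (auto simp: bounded_below_op_def poly_op_const intro!: exI[of _ "\<bar>k\<bar>"])

lemma bounded_below_poly_op_linear_neg_root:
  assumes "r < 0"
  shows "bounded_below_op (poly_op [:- r, 1:] A)"
proof (rule coercive_imp_bounded_below_op)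
  fix x
  show "- r * (norm x)\<^sup>2 \<le> Re (cinner (poly_op [:- r, 1:] A x) x)"
    using pos_opD(4)[OF A, of x]
    by (simp add: poly_op_linear pos_opD(2)[OF A] cinner_diff_left cinner_scaleR_left
        Re_cinner_self)
qed (use assms in simp)

lemma bounded_below_poly_op_linear_large_root:
  assumes "onorm A < r"
  shows "bounded_below_op (poly_op [:r, - 1:] A)"
proof (rule coercive_imp_bounded_below_op)
  fix x
  show "(r - onorm A) * (norm x)\<^sup>2 \<le> Re (cinner (poly_op [:r, - 1:] A x) x)"
    using Re_cinner_le_onorm[OF pos_opD(1)[OF A], of x]
    by (simp add: poly_op_linear pos_opD(2)[OF A] cinner_diff_left cinner_scaleR_left
        Re_cinner_self algebra_simps)
qed (use assms in simp)

lemma bounded_below_poly_op_quadratic: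
  assumes "b \<noteq> 0"
  shows "bounded_below_op (poly_op [:a\<^sup>2 + b\<^sup>2, -2 * a, 1:] A)"
proof (rule coercive_imp_bounded_below_op)
  fix x
  have lin: "linear A" using pos_opD(2)[OF A] .
  define L where "L = poly_op [:- a, 1:] A"
  have "[:a\<^sup>2 + b\<^sup>2, -2 * a, 1:] = [:- a, 1:] * [:- a, 1:] + [:b\<^sup>2:]"
    by (simp add: power2_eq_square algebra_simps)
  then have "poly_op [:a\<^sup>2 + b\<^sup>2, -2 * a, 1:] A x = L (L x) + b\<^sup>2 *\<^sub>R x"
    by (simp only: poly_op_add poly_op_mult[OF lin] poly_op_const L_def)
  moreover have "cinner (L (L x)) x = cinner (L x) (L x)"
    using selfadjoint_poly_op[OF lin pos_opD(3)[OF A]] by (simp add: L_def selfadjoint_op_def)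
  ultimately show "b\<^sup>2 * (norm x)\<^sup>2 \<le> Re (cinner (poly_op [:a\<^sup>2 + b\<^sup>2, -2 * a, 1:] A x) x)"
    by (simp add: cinner_add_left cinner_scaleR_left Re_cinner_self)
qed (use assms in simp)

text \<open>
  A real polynomial without zeros on \<open>[0, \<parallel>A\<parallel>]\<close> factors into linear factors with roots
  outside that interval and quadratics without real roots; each factor of \<open>p(A)\<close> is coercive.
\<close>

lemma positive_poly_factor:
  assumes deg: "degree p > 0" and pos: "\<And>t. 0 \<le> t \<Longrightarrow> t \<le> onorm A \<Longrightarrow> poly p t > 0"
  obtains f s where "p = f * s" "degree f > 0" "bounded_below_op (poly_op f A)"
    "\<And>t. 0 \<le> t \<Longrightarrow> t \<le> onorm A \<Longrightarrow> poly s t > 0"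
proof -
  note factorI = that
  have factor: thesis
    if p: "p = f * s" and "degree f > 0" "bounded_below_op (poly_op f A)"
      and f: "\<And>t. 0 \<le> t \<Longrightarrow> t \<le> onorm A \<Longrightarrow> poly f t > 0" for f s
  proof (rule factorI[OF p that(2,3)])
    fix t assume "0 \<le> t" "t \<le> onorm A"
    then show "poly s t > 0" using pos[of t] f[of t] by (metis p poly_mult zero_less_mult_pos)
  qed
  consider r where "poly p r = 0" | a b where "b \<noteq> 0" "[:a\<^sup>2 + b\<^sup>2, -2 * a, 1:] dvd p"
    using real_poly_root_or_quadratic_factor[OF deg] by blast
  then show ?thesis
  proof cases
    case (1 r)
    then obtain s where s: "p = [:- r, 1:] * s" by (auto simp: poly_eq_0_iff_dvd elim: dvdE)
    have "r < 0 \<or> onorm A < r" using pos[of r] 1 by force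
    then show ?thesis
    proof
      assume "r < 0"
      then show ?thesis
        by (intro factor[OF s] bounded_below_poly_op_linear_neg_root) auto
    next
      assume "onorm A < r"
      have p: "p = [:r, - 1:] * (- s)" using s by simp
      show ?thesis
        using \<open>onorm A < r\<close> by (intro factor[OF p] bounded_below_poly_op_linear_large_root) auto
    qed
  next
    case (2 a b)
    then obtain s where s: "p = [:a\<^sup>2 + b\<^sup>2, -2 * a, 1:] * s" by (elim dvdE)
    have "poly [:a\<^sup>2 + b\<^sup>2, -2 * a, 1:] t > 0" for t
    proof -
      have "poly [:a\<^sup>2 + b\<^sup>2, -2 * a, 1:] t = (t - a)\<^sup>2 + b\<^sup>2"
        by (simp add: power2_eq_square algebra_simps)
      moreover have "(t - a)\<^sup>2 + b\<^sup>2 > 0" using \<open>b \<noteq> 0\<close> by (simp add: add_nonneg_pos)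
      ultimately show ?thesis by linarith
    qed
    then show ?thesis
      using \<open>b \<noteq> 0\<close> by (intro factor[OF s] bounded_below_poly_op_quadratic) auto
  qed
qed

lemma bounded_below_poly_op:
  assumes "\<And>t. 0 \<le> t \<Longrightarrow> t \<le> onorm A \<Longrightarrow> poly p t > 0"
  shows "bounded_below_op (poly_op p A)"
  using assms
proof (induction "degree p" arbitrary: p rule: less_induct)
  case less
  have norm_A: "0 \<le> onorm A" using onorm_pos_le pos_opD(1)[OF A] by blast
  show ?case
  proof (cases "degree p = 0")
    case True
    then obtain k where "p = [:k:]" by (metis degree_eq_zeroE)
    then show ?thesis
      using less.prems[OF order.refl norm_A] bounded_below_poly_op_const by auto
  next
    case False
    then obtain f s where p: "p = f * s" and f: "degree f > 0" "bounded_below_op (poly_op f A)"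
      and s: "\<And>t. 0 \<le> t \<Longrightarrow> t \<le> onorm A \<Longrightarrow> poly s t > 0"
      using positive_poly_factor less.prems by blast
    have "s \<noteq> 0" "f \<noteq> 0" using s[OF order.refl norm_A] f(1) by auto
    then have "degree s < degree p" using p f(1) by (simp add: degree_mult_eq)
    then have "bounded_below_op (poly_op s A)" using less.hyps s by blast
    moreover have "poly_op p A = (\<lambda>x. poly_op f A (poly_op s A x))"
      by (simp add: p fun_eq_iff poly_op_mult[OF pos_opD(2)[OF A]])
    ultimately show ?thesis using bounded_below_op_compose[OF f(2)] by simp
  qed
qed

text \<open>
  If \<open>p(A)\<close> took a negative value, let \<open>m < 0\<close> be the infimum of its numerical range. Then
  \<open>p(A) - m\<close> is positive and, as \<open>p - m > 0\<close> on \<open>[0, \<parallel>A\<parallel>]\<close>, bounded below, hence coercive: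
  \<open>p(A) - m \<ge> c > 0\<close>, contradicting the choice of \<open>m\<close>.
\<close>

lemma poly_op_nonneg:
  assumes nonneg: "\<And>t. 0 \<le> t \<Longrightarrow> t \<le> onorm A \<Longrightarrow> poly p t \<ge> 0"
  shows "0 \<le> Re (cinner (poly_op p A x0) x0)"
proof (rule ccontr)
  assume neg: "\<not> 0 \<le> Re (cinner (poly_op p A x0) x0)"
  have lin: "linear A" and bl: "bounded_linear A" and sa: "selfadjoint_op A"
    using pos_opD[OF A] by auto
  have x0: "x0 \<noteq> 0" using neg by auto
  obtain m where m_le: "\<And>x. m * (norm x)\<^sup>2 \<le> Re (cinner (poly_op p A x) x)"
    and m_approx: "\<And>e. e > 0 \<Longrightarrow> \<exists>u. norm u = 1 \<and> Re (cinner (poly_op p A u) u) < m + e"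
    using numerical_range_Inf[OF bounded_linear_poly_op[OF bl] x0] by blast
  have "m * (norm x0)\<^sup>2 < 0" using m_le[of x0] neg by simp
  then have "m < 0" by (simp add: mult_less_0_iff)
  define S where "S = poly_op (p - [:m:]) A"
  have S_eq: "Re (cinner (S x) x) = Re (cinner (poly_op p A x) x) - m * (norm x)\<^sup>2" for x
    by (simp add: S_def poly_op_diff poly_op_const cinner_diff_left cinner_scaleR_left
        Re_cinner_self)
  have "bounded_below_op S"
    unfolding S_def using nonneg \<open>m < 0\<close> by (intro bounded_below_poly_op) force
  moreover have "0 \<le> Re (cinner (S x) x)" for x using m_le[of x] S_eq[of x] by simp
  ultimately obtain c where c: "c > 0" "\<And>x. c * (norm x)\<^sup>2 \<le> Re (cinner (S x) x)"
    using positive_bounded_below_imp_coercive[of S] bounded_linear_poly_op[OF bl]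
      selfadjoint_poly_op[OF lin sa] unfolding S_def by blast
  obtain u where "norm u = 1" "Re (cinner (poly_op p A u) u) < m + c"
    using m_approx[OF c(1)] by blast
  then show False using c(2)[of u] S_eq[of u] by simp
qed

lemma onorm_poly_op_le:
  assumes bound: "\<And>t. 0 \<le> t \<Longrightarrow> t \<le> onorm A \<Longrightarrow> \<bar>poly p t\<bar> \<le> e"
  shows "onorm (poly_op p A) \<le> e"
proof (rule onorm_bound)
  show "0 \<le> e" using bound[of 0] onorm_pos_le[OF pos_opD(1)[OF A]] by simp
  fix x
  have lower: "0 \<le> Re (cinner (poly_op ([:e:] - p) A y) y)" for y
    by (rule poly_op_nonneg) (use bound in \<open>force simp: abs_le_iff\<close>)
  have upper: "0 \<le> Re (cinner (poly_op ([:e:] + p) A y) y)" for y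
    by (rule poly_op_nonneg) (use bound in \<open>force simp: abs_le_iff\<close>)
  have "\<bar>Re (cinner (poly_op p A y) y)\<bar> \<le> e * (norm y)\<^sup>2" for y
    using lower[of y] upper[of y]
    by (simp add: poly_op_add poly_op_diff poly_op_const cinner_add_left cinner_diff_left
        cinner_scaleR_left Re_cinner_self abs_le_iff)
  then show "norm (poly_op p A x) \<le> e * norm x"
    using selfadjoint_norm_le selfadjoint_poly_op pos_opD(2,3)[OF A]
      bounded_linear.linear[OF bounded_linear_poly_op[OF pos_opD(1)[OF A]]] by blast
qed

end

section \<open>The continuous functional calculus\<close>

lemma Weierstrass_poly_seq:
  fixes g :: "real \<Rightarrow> real"
  assumes "continuous_on {a..b} g"
  obtains p :: "nat \<Rightarrow> real poly" where "uniform_limit {a..b} (\<lambda>n t. poly (p n) t) g sequentially"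
proof -
  have "\<exists>P :: real poly. \<forall>t\<in>{a..b}. \<bar>g t - poly P t\<bar> < 1 / Suc n" for n
  proof -
    obtain f where f: "real_polynomial_function f" "\<And>t. t \<in> {a..b} \<Longrightarrow> \<bar>g t - f t\<bar> < 1 / Suc n"
      using Stone_Weierstrass_real_polynomial_function[OF compact_Icc assms, of "1 / Suc n"] by auto
    obtain c N where "f = (\<lambda>t. \<Sum>i\<le>N. c i * t ^ i)"
      using f(1) real_polynomial_function_iff_sum by blast
    then have "poly (\<Sum>i\<le>N. monom (c i) i) t = f t" for t
      by (simp add: poly_sum poly_monom)
    then show ?thesis using f(2) by metis
  qed
  then obtain p where p: "\<And>n. \<forall>t\<in>{a..b}. \<bar>g t - poly (p n) t\<bar> < 1 / Suc n" by metis
  have "uniform_limit {a..b} (\<lambda>n t. poly (p n) t) g sequentially"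
  proof (rule uniform_limitI)
    fix e :: real assume "e > 0"
    then obtain N :: nat where N: "1 / Suc N < e" using nat_approx_posE by blast
    show "\<forall>\<^sub>F n in sequentially. \<forall>t\<in>{a..b}. dist (poly (p n) t) (g t) < e"
    proof (rule eventually_sequentiallyI)
      fix n assume "N \<le> n"
      then have "1 / real (Suc n) \<le> 1 / Suc N" by (simp add: frac_le)
      then show "\<forall>t\<in>{a..b}. dist (poly (p n) t) (g t) < e"
        using p[of n] N by (force simp: dist_real_def abs_minus_commute)
    qed
  qed
  then show ?thesis by (rule that)
qed

lemma tendsto_apply_if_onorm_tendsto_0:
  assumes "\<And>n. bounded_linear (P n)" "bounded_linear T"
    and "(\<lambda>n. onorm (\<lambda>x. P n x - T x)) \<longlonglongrightarrow> 0"
  shows "(\<lambda>n. P n x) \<longlonglongrightarrow> T x"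
proof -
  have "\<forall>n. norm (P n x - T x) \<le> onorm (\<lambda>x. P n x - T x) * norm x"
    using onorm[OF bounded_linear_sub[OF assms(1,2)]] by blast
  then have "(\<lambda>n. P n x - T x) \<longlonglongrightarrow> 0"
    by (rule Lim_null_comparison[OF always_eventually tendsto_mult_left_zero[OF assms(3)]])
  then show ?thesis by (rule LIM_zero_cancel)
qed

context
  fixes A :: "'a::chilbert \<Rightarrow> 'a"
  assumes A: "pos_op A"
begin

lemma onorm_poly_op_diff_le:
  assumes "\<forall>t\<in>{0..onorm A}. dist (poly p t) (g t) < e" "\<forall>t\<in>{0..onorm A}. dist (poly q t) (g t) < e"
  shows "onorm (poly_op (p - q) A) \<le> 2 * e"
proof (rule onorm_poly_op_le[OF A])
  fix t assume "0 \<le> t" "t \<le> onorm A"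
  then have "\<bar>poly p t - g t\<bar> < e" "\<bar>poly q t - g t\<bar> < e"
    using assms by (auto simp: dist_real_def)
  then show "\<bar>poly (p - q) t\<bar> \<le> 2 * e" by simp
qed

lemma poly_op_diff_tendsto_0:
  assumes p: "uniform_limit {0..onorm A} (\<lambda>n t. poly (p n) t) g sequentially"
    and q: "uniform_limit {0..onorm A} (\<lambda>n t. poly (q n) t) g sequentially"
  shows "(\<lambda>n. onorm (poly_op (p n - q n) A)) \<longlonglongrightarrow> 0"
proof (rule tendstoI)
  fix e :: real assume "e > 0"
  then have "\<forall>\<^sub>F n in sequentially. \<forall>t\<in>{0..onorm A}. dist (poly (p n) t) (g t) < e / 4"
    "\<forall>\<^sub>F n in sequentially. \<forall>t\<in>{0..onorm A}. dist (poly (q n) t) (g t) < e / 4"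
    using uniform_limitD[OF p, of "e / 4"] uniform_limitD[OF q, of "e / 4"] by simp_all
  then show "\<forall>\<^sub>F n in sequentially. dist (onorm (poly_op (p n - q n) A)) 0 < e"
  proof eventually_elim
    case (elim n)
    then have "onorm (poly_op (p n - q n) A) \<le> e / 2"
      using onorm_poly_op_diff_le[OF elim] by simp
    then show ?case
      using \<open>e > 0\<close> onorm_pos_le[OF bounded_linear_poly_op[OF pos_opD(1)[OF A]]] by simp
  qed
qed

lemma poly_op_limit_exists:
  assumes p: "uniform_limit {0..onorm A} (\<lambda>n t. poly (p n) t) g sequentially"
  obtains T where "bounded_linear T" "(\<lambda>n. onorm (\<lambda>x. poly_op (p n) A x - T x)) \<longlonglongrightarrow> 0"
proof -
  define L where "L n = Blinfun (poly_op (p n) A)" for n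
  have L: "blinfun_apply (L n) = poly_op (p n) A" for n
    unfolding L_def
    by (rule bounded_linear_Blinfun_apply[OF bounded_linear_poly_op[OF pos_opD(1)[OF A]]])
  have "Cauchy L"
  proof (rule metric_CauchyI)
    fix e :: real assume "e > 0"
    then obtain N where N: "\<And>n. n \<ge> N \<Longrightarrow> \<forall>t\<in>{0..onorm A}. dist (poly (p n) t) (g t) < e / 4"
      using uniform_limitD[OF p, of "e / 4"] by (auto simp: eventually_sequentially)
    have "dist (L m) (L n) < e" if "m \<ge> N" "n \<ge> N" for m n
    proof -
      have "dist (L m) (L n) = onorm (poly_op (p m - p n) A)"
        by (simp add: dist_norm norm_blinfun.rep_eq minus_blinfun.rep_eq L flip: poly_op_diff)
      also have "\<dots> \<le> e / 2" using onorm_poly_op_diff_le[OF N N, OF that] by simp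
      finally show ?thesis using \<open>e > 0\<close> by simp
    qed
    then show "\<exists>M. \<forall>m\<ge>M. \<forall>n\<ge>M. dist (L m) (L n) < e" by blast
  qed
  then obtain B where "L \<longlonglongrightarrow> B" using Cauchy_convergent_iff convergent_def by blast
  then have "(\<lambda>n. norm (L n - B)) \<longlonglongrightarrow> 0" by (simp add: tendsto_norm_zero LIM_zero)
  moreover have "norm (L n - B) = onorm (\<lambda>x. poly_op (p n) A x - blinfun_apply B x)" for n
    by (simp add: norm_blinfun.rep_eq minus_blinfun.rep_eq L)
  ultimately show ?thesis using that blinfun.bounded_linear_right by auto
qed

lemma poly_op_limit_indep:
  assumes p: "uniform_limit {0..onorm A} (\<lambda>n t. poly (p n) t) g sequentially"
    and q: "uniform_limit {0..onorm A} (\<lambda>n t. poly (q n) t) g sequentially"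
    and T: "bounded_linear T" and lim: "(\<lambda>n. onorm (\<lambda>x. poly_op (p n) A x - T x)) \<longlonglongrightarrow> 0"
  shows "(\<lambda>n. onorm (\<lambda>x. poly_op (q n) A x - T x)) \<longlonglongrightarrow> 0"
proof (rule Lim_null_comparison[OF always_eventually])
  have bl: "bounded_linear (poly_op r A)" for r
    using bounded_linear_poly_op[OF pos_opD(1)[OF A]] .
  show "\<forall>n. norm (onorm (\<lambda>x. poly_op (q n) A x - T x))
      \<le> onorm (poly_op (q n - p n) A) + onorm (\<lambda>x. poly_op (p n) A x - T x)"
  proof
    fix n
    have "onorm (\<lambda>x. poly_op (q n) A x - T x)
        = onorm (\<lambda>x. poly_op (q n - p n) A x + (poly_op (p n) A x - T x))"
      by (simp add: poly_op_diff)
    also have "\<dots> \<le> onorm (poly_op (q n - p n) A) + onorm (\<lambda>x. poly_op (p n) A x - T x)"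
      by (intro onorm_triangle bl bounded_linear_sub T)
    finally show "norm (onorm (\<lambda>x. poly_op (q n) A x - T x))
        \<le> onorm (poly_op (q n - p n) A) + onorm (\<lambda>x. poly_op (p n) A x - T x)"
      using onorm_pos_le[OF bounded_linear_sub[OF bl T]] by simp
  qed
  show "(\<lambda>n. onorm (poly_op (q n - p n) A) + onorm (\<lambda>x. poly_op (p n) A x - T x)) \<longlonglongrightarrow> 0"
    using tendsto_add[OF poly_op_diff_tendsto_0[OF q p] lim] by simp
qed

lemma poly_op_limit_bounded_clinear_selfadjoint:
  assumes T: "bounded_linear T" and lim: "(\<lambda>n. onorm (\<lambda>x. poly_op (p n) A x - T x)) \<longlonglongrightarrow> 0"
  shows "bounded_clinear T" "selfadjoint_op T"
proof -
  have bl: "bounded_linear A" and lin: "linear A" and sa: "selfadjoint_op A"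
    and clin: "\<And>c x. A (cscale c x) = cscale c (A x)"
    using pos_opD[OF A] by auto
  have pw: "(\<lambda>n. poly_op (p n) A x) \<longlonglongrightarrow> T x" for x
    by (rule tendsto_apply_if_onorm_tendsto_0[OF bounded_linear_poly_op[OF bl] T lim])
  have "T (cscale c x) = cscale c (T x)" for c x
  proof (rule LIMSEQ_unique)
    show "(\<lambda>n. cscale c (poly_op (p n) A x)) \<longlonglongrightarrow> T (cscale c x)"
      using pw[of "cscale c x"] by (simp add: poly_op_cscale[OF clin])
    show "(\<lambda>n. cscale c (poly_op (p n) A x)) \<longlonglongrightarrow> cscale c (T x)"
      by (rule bounded_linear.tendsto[OF bounded_linear_cscale pw])
  qed
  then show "bounded_clinear T" using T by (simp add: bounded_clinear_def)
  have "cinner (T x) y = cinner x (T y)" for x y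
  proof -
    have "cinner (T x) y = cnj (cinner (T y) x)"
    proof (rule LIMSEQ_unique)
      show "(\<lambda>n. cinner (poly_op (p n) A x) y) \<longlonglongrightarrow> cinner (T x) y"
        by (rule bounded_linear.tendsto[OF bounded_linear_cinner_left pw])
      have "(\<lambda>n. cnj (cinner (poly_op (p n) A y) x)) \<longlonglongrightarrow> cnj (cinner (T y) x)"
        by (intro tendsto_cnj bounded_linear.tendsto[OF bounded_linear_cinner_left pw])
      then show "(\<lambda>n. cinner (poly_op (p n) A x) y) \<longlonglongrightarrow> cnj (cinner (T y) x)"
        using selfadjoint_poly_op[OF lin sa]
        by (simp add: selfadjoint_op_def cinner_commute[of x "poly_op _ A y"])
    qed
    then show ?thesis by (simp add: cinner_commute[of x "T y"])
  qed
  then show "selfadjoint_op T" by (simp add: selfadjoint_op_def)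
qed

lemma cfc_eqI:
  assumes p: "uniform_limit {0..onorm A} (\<lambda>n t. poly (p n) t) g sequentially"
    and T: "bounded_linear T" and lim: "(\<lambda>n. onorm (\<lambda>x. poly_op (p n) A x - T x)) \<longlonglongrightarrow> 0"
  shows "cfc g A = T"
  unfolding cfc_def
proof (rule the_equality)
  show "bounded_clinear T \<and> (\<forall>q :: nat \<Rightarrow> real poly.
      uniform_limit {0..onorm A} (\<lambda>n t. poly (q n) t) g sequentially \<longrightarrow>
      (\<lambda>n. onorm (\<lambda>x. poly_op (q n) A x - T x)) \<longlonglongrightarrow> 0)"
    using poly_op_limit_bounded_clinear_selfadjoint(1)[OF T lim] poly_op_limit_indep[OF p _ T lim]
    by blast
  fix T'
  assume T': "bounded_clinear T' \<and> (\<forall>q :: nat \<Rightarrow> real poly.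
      uniform_limit {0..onorm A} (\<lambda>n t. poly (q n) t) g sequentially \<longrightarrow>
      (\<lambda>n. onorm (\<lambda>x. poly_op (q n) A x - T' x)) \<longlonglongrightarrow> 0)"
  have bl: "bounded_linear (poly_op (p n) A)" for n
    by (rule bounded_linear_poly_op[OF pos_opD(1)[OF A]])
  show "T' = T"
  proof
    fix x
    have "(\<lambda>n. poly_op (p n) A x) \<longlonglongrightarrow> T' x"
      using T' p by (intro tendsto_apply_if_onorm_tendsto_0[OF bl]) (auto simp: bounded_clinear_def)
    moreover have "(\<lambda>n. poly_op (p n) A x) \<longlonglongrightarrow> T x"
      by (rule tendsto_apply_if_onorm_tendsto_0[OF bl T lim])
    ultimately show "T' x = T x" by (rule LIMSEQ_unique)
  qed
qed

lemma cfc_approx: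
  assumes g: "continuous_on {0..onorm A} g"
  obtains p where "uniform_limit {0..onorm A} (\<lambda>n t. poly (p n) t) g sequentially"
    "bounded_linear (cfc g A)" "(\<lambda>n. onorm (\<lambda>x. poly_op (p n) A x - cfc g A x)) \<longlonglongrightarrow> 0"
proof -
  obtain p where p: "uniform_limit {0..onorm A} (\<lambda>n t. poly (p n) t) g sequentially"
    using Weierstrass_poly_seq[OF g] .
  obtain T where T: "bounded_linear T" and lim: "(\<lambda>n. onorm (\<lambda>x. poly_op (p n) A x - T x)) \<longlonglongrightarrow> 0"
    using poly_op_limit_exists[OF p] .
  show ?thesis using that[OF p] T lim unfolding cfc_eqI[OF p T lim] .
qed

lemma bounded_clinear_cfc:
  assumes "continuous_on {0..onorm A} g"
  shows "bounded_clinear (cfc g A)"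
  by (rule cfc_approx[OF assms]) (erule poly_op_limit_bounded_clinear_selfadjoint(1))

lemma selfadjoint_cfc:
  assumes "continuous_on {0..onorm A} g"
  shows "selfadjoint_op (cfc g A)"
  by (rule cfc_approx[OF assms]) (erule poly_op_limit_bounded_clinear_selfadjoint(2))

lemma cfc_uminus:
  assumes g: "continuous_on {0..onorm A} g"
  shows "cfc (\<lambda>t. - g t) A = (\<lambda>x. - cfc g A x)"
proof -
  obtain p where p: "uniform_limit {0..onorm A} (\<lambda>n t. poly (p n) t) g sequentially"
    and T: "bounded_linear (cfc g A)"
    and lim: "(\<lambda>n. onorm (\<lambda>x. poly_op (p n) A x - cfc g A x)) \<longlonglongrightarrow> 0"
    using cfc_approx[OF g] .
  have "uniform_limit {0..onorm A} (\<lambda>n t. poly (- p n) t) (\<lambda>t. - g t) sequentially"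
    using p by (simp add: uniform_limit_iff dist_real_def abs_minus_commute)
  moreover have "onorm (\<lambda>x. poly_op (- p n) A x - - cfc g A x)
      = onorm (\<lambda>x. poly_op (p n) A x - cfc g A x)" for n
    using onorm_neg[of "\<lambda>x. poly_op (p n) A x - cfc g A x"] by (simp add: poly_op_minus)
  ultimately show ?thesis
    using lim by (intro cfc_eqI[of "\<lambda>n. - p n"] bounded_linear_minus[OF T]) simp_all
qed

lemma cfc_ge_affine:
  assumes g: "continuous_on {0..onorm A} g"
    and minorant: "\<And>t. 0 \<le> t \<Longrightarrow> t \<le> onorm A \<Longrightarrow> a + b * t \<le> g t"
  shows "a * (norm y)\<^sup>2 + b * Re (cinner (A y) y) \<le> Re (cinner (cfc g A y) y)"
proof -
  obtain p where p: "uniform_limit {0..onorm A} (\<lambda>n t. poly (p n) t) g sequentially"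
    and T: "bounded_linear (cfc g A)"
    and lim: "(\<lambda>n. onorm (\<lambda>x. poly_op (p n) A x - cfc g A x)) \<longlonglongrightarrow> 0"
    using cfc_approx[OF g] .
  have lin: "linear A" using pos_opD(2)[OF A] .
  have "(\<lambda>n. poly_op (p n) A y) \<longlonglongrightarrow> cfc g A y"
    by (rule tendsto_apply_if_onorm_tendsto_0[OF bounded_linear_poly_op[OF pos_opD(1)[OF A]] T lim])
  then have conv: "(\<lambda>n. Re (cinner (poly_op (p n) A y) y)) \<longlonglongrightarrow> Re (cinner (cfc g A y) y)"
    by (intro tendsto_Re bounded_linear.tendsto[OF bounded_linear_cinner_left])
  have approx:
    "a * (norm y)\<^sup>2 + b * Re (cinner (A y) y) - e * (norm y)\<^sup>2 \<le> Re (cinner (cfc g A y) y)"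
    if "e > 0" for e
  proof (rule LIMSEQ_le_const[OF conv])
    obtain N where N: "\<And>n. n \<ge> N \<Longrightarrow> \<forall>t\<in>{0..onorm A}. dist (poly (p n) t) (g t) < e"
      using uniform_limitD[OF p \<open>e > 0\<close>] by (auto simp: eventually_sequentially)
    have "a * (norm y)\<^sup>2 + b * Re (cinner (A y) y) - e * (norm y)\<^sup>2
        \<le> Re (cinner (poly_op (p n) A y) y)" if "n \<ge> N" for n
    proof -
      have "0 \<le> Re (cinner (poly_op (p n - [:a, b:] + [:e:]) A y) y)"
      proof (rule poly_op_nonneg[OF A])
        fix t assume t: "0 \<le> t" "t \<le> onorm A"
        then have "\<bar>poly (p n) t - g t\<bar> < e" using N[OF that] by (simp add: dist_real_def)
        then show "0 \<le> poly (p n - [:a, b:] + [:e:]) t"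
          using minorant[OF t] by (simp add: abs_less_iff mult.commute)
      qed
      then show ?thesis
        by (simp add: poly_op_add poly_op_diff poly_op_linear[OF lin] poly_op_const
            cinner_add_left cinner_diff_left cinner_scaleR_left Re_cinner_self)
    qed
    then show "\<exists>N. \<forall>n\<ge>N. a * (norm y)\<^sup>2 + b * Re (cinner (A y) y) - e * (norm y)\<^sup>2
        \<le> Re (cinner (poly_op (p n) A y) y)" by blast
  qed
  show ?thesis
  proof (rule field_le_epsilon)
    fix e :: real assume "e > 0"
    have ny: "(norm y)\<^sup>2 + 1 > 0" using zero_le_power2[of "norm y"] by linarith
    then have "e / ((norm y)\<^sup>2 + 1) * (norm y)\<^sup>2 \<le> e"
      using \<open>e > 0\<close> by (simp add: divide_le_eq)
    then show "a * (norm y)\<^sup>2 + b * Re (cinner (A y) y) \<le> Re (cinner (cfc g A y) y) + e"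
      using approx[of "e / ((norm y)\<^sup>2 + 1)"] \<open>e > 0\<close> ny by simp
  qed
qed

end

section \<open>Convex functions on the half-line\<close>

lemma convex_on_supporting_line:
  fixes g :: "real \<Rightarrow> real"
  assumes convex: "convex_on {0..} g" and t0: "t0 > 0"
  obtains k where "\<And>t. 0 \<le> t \<Longrightarrow> g t0 + k * (t - t0) \<le> g t"
proof -
  define S where "S = {(g t0 - g s) / (t0 - s) | s. 0 \<le> s \<and> s < t0}"
  have slopes: "(g t0 - g s) / (t0 - s) \<le> (g u - g t0) / (u - t0)"
    if "0 \<le> s" "s < t0" "t0 < u" for s u
  proof -
    have "(g s - g t0) / (s - t0) \<le> (g s - g u) / (s - u)"
      using convex_on_slope_le(1)[OF convex, of s u t0] that by simp
    also have "\<dots> \<le> (g t0 - g u) / (t0 - u)"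
      using convex_on_slope_le(2)[OF convex, of s u t0] that by simp
    finally show ?thesis by (metis minus_diff_eq minus_divide_divide)
  qed
  have S_ne: "S \<noteq> {}" using t0 by (auto simp: S_def)
  have S_bdd: "bdd_above S"
    unfolding bdd_above_def S_def using slopes[of _ "t0 + 1"] t0 by auto
  have "g t0 + Sup S * (t - t0) \<le> g t" if "0 \<le> t" for t
  proof (cases t t0 rule: linorder_cases)
    case less
    then have "(g t0 - g t) / (t0 - t) \<in> S" using that by (auto simp: S_def)
    then have "(g t0 - g t) / (t0 - t) \<le> Sup S" using S_bdd by (rule cSup_upper)
    then show ?thesis using less by (simp add: divide_le_eq algebra_simps)
  next
    case greater
    have "Sup S \<le> (g t - g t0) / (t - t0)"
      using S_ne by (rule cSup_least) (use slopes greater in \<open>auto simp: S_def\<close>)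
    then show ?thesis using greater by (simp add: le_divide_eq)
  qed simp
  then show ?thesis by (rule that)
qed

text \<open>
  At the boundary point \<open>0\<close> there may be no supporting line; instead the intercepts
  \<open>g s - k\<^sub>s s \<ge> 2 g(s) - g(2 s)\<close> of the supporting lines at \<open>s > 0\<close> tend to \<open>g 0\<close>.
\<close>

lemma convex_on_le_if_affine_minorants_le:
  fixes g :: "real \<Rightarrow> real"
  assumes convex: "convex_on {0..} g" and cont: "continuous_on {0..} g" and "0 \<le> t0"
    and minorants: "\<And>a b. (\<And>t. 0 \<le> t \<Longrightarrow> a + b * t \<le> g t) \<Longrightarrow> a + b * t0 \<le> v"
  shows "g t0 \<le> v"
proof (cases "t0 = 0")
  case False
  with \<open>0 \<le> t0\<close> have "t0 > 0" by simp
  then obtain k where "\<And>t. 0 \<le> t \<Longrightarrow> g t0 + k * (t - t0) \<le> g t"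
    using convex_on_supporting_line[OF convex] by blast
  then show ?thesis using minorants[of "g t0 - k * t0" k] by (simp add: algebra_simps)
next
  case True
  have intercept: "2 * g s - g (2 * s) \<le> v" if s: "s > 0" for s
  proof -
    obtain k where k: "\<And>t. 0 \<le> t \<Longrightarrow> g s + k * (t - s) \<le> g t"
      using convex_on_supporting_line[OF convex s] by blast
    have "g s - k * s \<le> v" using minorants[of "g s - k * s" k] k True by (simp add: algebra_simps)
    moreover have "g s + k * s \<le> g (2 * s)" using k[of "2 * s"] s by (simp add: algebra_simps)
    ultimately show ?thesis by linarith
  qed
  have "continuous_on {0..} (\<lambda>s. 2 * g s - g (2 * s))"
    by (intro continuous_intros cont continuous_on_compose2[OF cont]) auto
  then have "continuous (at_right 0) (\<lambda>s. 2 * g s - g (2 * s))"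
    by (rule continuous_on_imp_continuous_within) auto
  then have "((\<lambda>s. 2 * g s - g (2 * s)) \<longlongrightarrow> g 0) (at_right 0)"
    by (simp add: continuous_within)
  moreover have "\<forall>\<^sub>F s in at_right 0. 2 * g s - g (2 * s) \<le> v"
    using eventually_at_right_less[of 0] by eventually_elim (rule intercept)
  ultimately show ?thesis
    using True tendsto_upperbound trivial_limit_at_right_real by blast
qed

text \<open>
  If \<open>y\<close> and \<open>z\<close> lie on the same side of the mean \<open>s\<close>, then \<open>(x+z)/2\<close> and \<open>(x+y)/2\<close> are convex
  combinations of \<open>s\<close> and \<open>x\<close> whose weights on \<open>x\<close> add up to \<open>1/2\<close>.
\<close>

lemma Popoviciu_inequality_aux:
  fixes g :: "real \<Rightarrow> real"
  assumes convex: "convex_on {0..} g" and nonneg: "0 \<le> x" "0 \<le> y" "0 \<le> z"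
    and s: "s = (x + y + z) / 3" and side: "(s \<le> y \<and> s \<le> z) \<or> (y \<le> s \<and> z \<le> s)"
  shows "2 * (g ((x + y) / 2) + g ((y + z) / 2) + g ((x + z) / 2)) \<le> g x + g y + g z + 3 * g s"
proof (cases "x = s")
  case True
  then have "y = s" "z = s" using side s by auto
  then show ?thesis using True by simp
next
  case False
  have "0 \<le> s" using nonneg s by simp
  define \<beta> where "\<beta> = (y - s) / (2 * (s - x))"
  define \<gamma> where "\<gamma> = (z - s) / (2 * (s - x))"
  have "0 \<le> \<beta>" "0 \<le> \<gamma>"
    using side s by (auto simp: \<beta>_def \<gamma>_def zero_le_divide_iff)
  moreover have sum: "\<beta> + \<gamma> = 1 / 2"
  proof -
    have "\<beta> + \<gamma> = (y + z - 2 * s) / (2 * (s - x))"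
      by (simp add: \<beta>_def \<gamma>_def add_divide_distrib[symmetric])
    also have "y + z - 2 * s = s - x" using s by simp
    finally show ?thesis using False by simp
  qed
  ultimately have "\<beta> \<le> 1" "\<gamma> \<le> 1" by auto
  have \<beta>_eq: "\<beta> * (s - x) = (y - s) / 2" and \<gamma>_eq: "\<gamma> * (s - x) = (z - s) / 2"
    using False by (simp_all add: \<beta>_def \<gamma>_def field_simps)
  have "(x + z) / 2 = s - \<beta> * (s - x)" unfolding \<beta>_eq using s by (simp add: field_simps)
  then have mid_xz: "(x + z) / 2 = (1 - \<beta>) * s + \<beta> * x" by (simp add: algebra_simps)
  have convex_xz: "g ((x + z) / 2) \<le> (1 - \<beta>) * g s + \<beta> * g x"
    unfolding mid_xz using convex_onD[OF convex, of \<beta> s x] \<open>0 \<le> s\<close> nonneg \<open>0 \<le> \<beta>\<close> \<open>\<beta> \<le> 1\<close>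
    by simp
  have "(x + y) / 2 = s - \<gamma> * (s - x)" unfolding \<gamma>_eq using s by (simp add: field_simps)
  then have mid_xy: "(x + y) / 2 = (1 - \<gamma>) * s + \<gamma> * x" by (simp add: algebra_simps)
  have convex_xy: "g ((x + y) / 2) \<le> (1 - \<gamma>) * g s + \<gamma> * g x"
    unfolding mid_xy using convex_onD[OF convex, of \<gamma> s x] \<open>0 \<le> s\<close> nonneg \<open>0 \<le> \<gamma>\<close> \<open>\<gamma> \<le> 1\<close>
    by simp
  have "g ((y + z) / 2) \<le> g y / 2 + g z / 2"
    using convex_onD[OF convex, of "1 / 2" y z] nonneg by (simp add: add_divide_distrib)
  with convex_xz convex_xy have "2 * (g ((x + y) / 2) + g ((y + z) / 2) + g ((x + z) / 2))
      \<le> g y + g z + 2 * (\<beta> + \<gamma>) * g x + (4 - 2 * (\<beta> + \<gamma>)) * g s"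
    by (simp add: algebra_simps)
  then show ?thesis unfolding sum by simp
qed

lemma Popoviciu_inequality:
  fixes g :: "real \<Rightarrow> real"
  assumes convex: "convex_on {0..} g" and nonneg: "0 \<le> x" "0 \<le> y" "0 \<le> z"
  shows "2 * (g ((x + y) / 2) + g ((y + z) / 2) + g ((x + z) / 2))
    \<le> g x + g y + g z + 3 * g ((x + y + z) / 3)"
proof -
  define s where "s = (x + y + z) / 3"
  \<comment> \<open>Of any three numbers, two lie on the same side of their mean.\<close>
  consider "(s \<le> y \<and> s \<le> z) \<or> (y \<le> s \<and> z \<le> s)" | "(s \<le> x \<and> s \<le> z) \<or> (x \<le> s \<and> z \<le> s)"
    | "(s \<le> x \<and> s \<le> y) \<or> (x \<le> s \<and> y \<le> s)"
    by linarith
  then show ?thesis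
  proof cases
    case 1
    from Popoviciu_inequality_aux[OF convex nonneg s_def this] show ?thesis by (simp add: s_def)
  next
    case 2
    from Popoviciu_inequality_aux[OF convex nonneg(2,1,3) _ this] show ?thesis
      by (simp add: s_def algebra_simps)
  next
    case 3
    from Popoviciu_inequality_aux[OF convex nonneg(3,1,2) _ this] show ?thesis
      by (simp add: s_def algebra_simps)
  qed
qed


section \<open>Jensen's inequality for normalized positive maps\<close>

lemma pos_op_cfc_minus_affine:
  assumes A: "pos_op A" and g: "continuous_on {0..onorm A} g"
    and minorant: "\<And>t. 0 \<le> t \<Longrightarrow> t \<le> onorm A \<Longrightarrow> a + b * t \<le> g t"
  shows "pos_op (\<lambda>y. cfc g A y + (- a) *\<^sub>R y + (- b) *\<^sub>R A y)"
  unfolding pos_op_def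
proof (intro conjI allI)
  have A': "bounded_clinear A" "selfadjoint_op A" using A by (auto simp: pos_op_def)
  show "bounded_clinear (\<lambda>y. cfc g A y + (- a) *\<^sub>R y + (- b) *\<^sub>R A y)"
    by (intro bounded_clinear_add bounded_clinear_scaleR bounded_clinear_ident
        bounded_clinear_cfc[OF A g] A')
  show "selfadjoint_op (\<lambda>y. cfc g A y + (- a) *\<^sub>R y + (- b) *\<^sub>R A y)"
    using selfadjoint_cfc[OF A g] A'(2)
    by (simp add: selfadjoint_op_def cinner_diff_left cinner_diff_right cinner_scaleR_left
        cinner_scaleR_right)
  fix y
  show "0 \<le> Re (cinner (cfc g A y + (- a) *\<^sub>R y + (- b) *\<^sub>R A y) y)"
    using cfc_ge_affine[OF A g minorant, of y]
    by (simp add: cinner_diff_left cinner_scaleR_left Re_cinner_self)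
qed

lemma normalized_positive_mapD:
  assumes "normalized_positive_map \<Phi>"
  shows "\<And>S T. bounded_clinear S \<Longrightarrow> bounded_clinear T \<Longrightarrow>
      \<Phi> (\<lambda>y. S y + T y) = (\<lambda>y. \<Phi> S y + \<Phi> T y)"
    and "\<And>c S. bounded_clinear S \<Longrightarrow> \<Phi> (\<lambda>y. cscale c (S y)) = (\<lambda>y. cscale c (\<Phi> S y))"
    and "\<And>S. pos_op S \<Longrightarrow> pos_op (\<Phi> S)"
    and "\<Phi> (\<lambda>y. y) = (\<lambda>y. y)"
  using assms unfolding normalized_positive_map_def id_def by blast+

context
  fixes \<Phi> :: "('a::chilbert \<Rightarrow> 'a) \<Rightarrow> ('b::chilbert \<Rightarrow> 'b)" and x :: 'b
  assumes \<Phi>: "normalized_positive_map \<Phi>"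
begin

lemma Re_cinner_map_add:
  "bounded_clinear S \<Longrightarrow> bounded_clinear T \<Longrightarrow>
    Re (cinner (\<Phi> (\<lambda>y. S y + T y) x) x) = Re (cinner (\<Phi> S x) x) + Re (cinner (\<Phi> T x) x)"
  by (simp add: normalized_positive_mapD(1)[OF \<Phi>] cinner_add_left)

lemma Re_cinner_map_scaleR:
  assumes "bounded_clinear S"
  shows "Re (cinner (\<Phi> (\<lambda>y. r *\<^sub>R S y) x) x) = r * Re (cinner (\<Phi> S x) x)"
  using normalized_positive_mapD(2)[OF \<Phi> assms, of "of_real r"]
  by (simp add: cscale_of_real cinner_scaleR_left)

lemma Re_cinner_map_uminus:
  assumes "bounded_clinear S"
  shows "Re (cinner (\<Phi> (\<lambda>y. - S y) x) x) = - Re (cinner (\<Phi> S x) x)"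
  using Re_cinner_map_scaleR[OF assms, of "- 1"] by simp

lemma Re_cinner_map_nonneg: "pos_op S \<Longrightarrow> 0 \<le> Re (cinner (\<Phi> S x) x)"
  using normalized_positive_mapD(3)[OF \<Phi>] by (simp add: pos_op_def)

lemma Jensen_normalized_positive_map:
  assumes A: "pos_op A" and cont: "continuous_on {0..} g" and convex: "convex_on {0..} g"
    and x: "norm x = 1"
  shows "g (Re (cinner (\<Phi> A x) x)) \<le> Re (cinner (\<Phi> (cfc g A) x) x)"
proof (rule convex_on_le_if_affine_minorants_le[OF convex cont Re_cinner_map_nonneg[OF A]])
  fix a b
  assume minorant: "\<And>t. 0 \<le> t \<Longrightarrow> a + b * t \<le> g t"
  have g: "continuous_on {0..onorm A} g" using cont by (rule continuous_on_subset) auto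
  have bc: "bounded_clinear A" "bounded_clinear (cfc g A)" "bounded_clinear (\<lambda>y. y)"
    using A bounded_clinear_cfc[OF A g] bounded_clinear_ident by (auto simp: pos_op_def)
  have "0 \<le> Re (cinner (\<Phi> (\<lambda>y. cfc g A y + (- a) *\<^sub>R y + (- b) *\<^sub>R A y) x) x)"
    using minorant by (intro Re_cinner_map_nonneg pos_op_cfc_minus_affine[OF A g]) auto
  also have "\<dots> = Re (cinner (\<Phi> (cfc g A) x) x) - a - b * Re (cinner (\<Phi> A x) x)"
    using Re_cinner_map_add[OF bounded_clinear_add[OF bc(2) bounded_clinear_scaleR[OF bc(3)]]
        bounded_clinear_scaleR[OF bc(1)], of "- a" "- b"]
      Re_cinner_map_add[OF bc(2) bounded_clinear_scaleR[OF bc(3)], of "- a"]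
      Re_cinner_map_scaleR[OF bc(3), of "- a"] Re_cinner_map_scaleR[OF bc(1), of "- b"]
      x normalized_positive_mapD(4)[OF \<Phi>]
    by (simp add: Re_cinner_self)
  finally show "a + b * Re (cinner (\<Phi> A x) x) \<le> Re (cinner (\<Phi> (cfc g A) x) x)" by simp
qed

lemma Popoviciu_normalized_positive_map:
  assumes A: "pos_op A" and B: "pos_op B" and D: "pos_op D"
    and cont: "continuous_on {0..} g" and convex: "convex_on {0..} g" and x: "norm x = 1"
  defines "q \<equiv> \<lambda>S. Re (cinner (\<Phi> S x) x)"
  shows "(2/3) * (g ((q A + q B) / 2) + g ((q B + q D) / 2) + g ((q A + q D) / 2))
    \<le> (q (cfc g A) + q (cfc g B) + q (cfc g D)) / 3 + g ((q A + q B + q D) / 3)"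
proof -
  have "2 * (g ((q A + q B) / 2) + g ((q B + q D) / 2) + g ((q A + q D) / 2))
      \<le> q (cfc g A) + q (cfc g B) + q (cfc g D) + 3 * g ((q A + q B + q D) / 3)"
    using Popoviciu_inequality[OF convex Re_cinner_map_nonneg[OF A] Re_cinner_map_nonneg[OF B]
        Re_cinner_map_nonneg[OF D]]
      Jensen_normalized_positive_map[OF A cont convex x]
      Jensen_normalized_positive_map[OF B cont convex x]
      Jensen_normalized_positive_map[OF D cont convex x]
    unfolding q_def by linarith
  then show ?thesis by (simp add: field_simps)
qed

end

theorem proposition3:
  fixes A B D :: "'a::chilbert \<Rightarrow> 'a"
    and \<Phi> :: "('a \<Rightarrow> 'a) \<Rightarrow> ('b::chilbert \<Rightarrow> 'b)"
    and g :: "real \<Rightarrow> real"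
    and x :: 'b
  assumes "pos_op A" and "pos_op B" and "pos_op D"
    and "normalized_positive_map \<Phi>"
    and "continuous_on {0..} g" and "g 0 = 0"
    and "norm x = 1"
  defines "q \<equiv> (\<lambda>S. Re (cinner (\<Phi> S x) x))"
  shows "(convex_on {0..} g \<longrightarrow>
            q (\<lambda>y. (1/3) *\<^sub>R (cfc g A y + cfc g B y + cfc g D y))
              + g (q (\<lambda>y. (1/3) *\<^sub>R (A y + B y + D y)))
            \<ge> (2/3) * (g (q (\<lambda>y. (1/2) *\<^sub>R (A y + B y)))
                       + g (q (\<lambda>y. (1/2) *\<^sub>R (B y + D y)))
                       + g (q (\<lambda>y. (1/2) *\<^sub>R (A y + D y)))))
       \<and> (concave_on {0..} g \<longrightarrow>
            q (\<lambda>y. (1/3) *\<^sub>R (cfc g A y + cfc g B y + cfc g D y))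
              + g (q (\<lambda>y. (1/3) *\<^sub>R (A y + B y + D y)))
            \<le> (2/3) * (g (q (\<lambda>y. (1/2) *\<^sub>R (A y + B y)))
                       + g (q (\<lambda>y. (1/2) *\<^sub>R (B y + D y)))
                       + g (q (\<lambda>y. (1/2) *\<^sub>R (A y + D y)))))"
proof -
  note pos = assms(1-3) and \<Phi> = assms(4) and cont = assms(5) and x = assms(7)
  have cont': "continuous_on {0..onorm S} h" if "continuous_on {0..} h" for S and h :: "real \<Rightarrow> real"
    using that by (rule continuous_on_subset) auto
  have bc: "bounded_clinear A" "bounded_clinear B" "bounded_clinear D"
    "bounded_clinear (cfc g A)" "bounded_clinear (cfc g B)" "bounded_clinear (cfc g D)"
    using pos bounded_clinear_cfc[OF _ cont'[OF cont]] by (auto simp: pos_op_def)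
  note linear = Re_cinner_map_add[OF \<Phi>] Re_cinner_map_scaleR[OF \<Phi>] Re_cinner_map_uminus[OF \<Phi>]
    bounded_clinear_add bounded_clinear_scaleR bc
  let "(_ \<longrightarrow> ?convex_case) \<and> (_ \<longrightarrow> ?concave_case)" = ?thesis
  show ?thesis
  proof (intro conjI impI)
    assume "convex_on {0..} g"
    from Popoviciu_normalized_positive_map[OF \<Phi> pos cont this x] show ?convex_case
      unfolding q_def by (simp add: linear)
  next
    assume "concave_on {0..} g"
    then have "convex_on {0..} (\<lambda>t. - g t)" by (simp add: concave_on_def)
    from Popoviciu_normalized_positive_map[OF \<Phi> pos continuous_on_minus[OF cont] this x]
    show ?concave_case
      unfolding q_def cfc_uminus[OF pos(1) cont'[OF cont]] cfc_uminus[OF pos(2) cont'[OF cont]]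
        cfc_uminus[OF pos(3) cont'[OF cont]]
      by (simp add: linear field_simps)
  qed
qed

end
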